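(* Let $K_0$ be a finite extension of $\mathbb{Q}_2$ with odd absolute ramification index $e_0$, and let $K_2/K_0$ be a totally ramified cyclic extension of degree $4$ with Galois group generated by $\sigma$, with intermediate field $K_1$ (the fixed field of $\sigma^2$), whose lower ramification break numbers are $b_1=e_0$ and $b_2=b_1+2e_0$. Then for every odd integer $a$ there are $\alpha,\rho\in K_2$ with $v_2(\alpha)=a$ and $v_2(\rho)=a+(b_2-b_1)$ such that: if $a\equiv e_0\pmod 4$, then $\mu_1:=(\sigma-1)\alpha-\rho\in K_1$ with $v_2(\mu_1)=a+b_1$; if $a\equiv 3e_0\pmod 4$, then $\mu_0:=(\sigma+1)\alpha-\rho\in K_0$ with $v_2(\mu_0)=a+b_1$.
   Context: $v_2$ is the normalized valuation of $K_2$. The lower ramification break numbers of $\mathrm{Gal}(K_2/K_0)$ are the integers $j\ge1$ with $G_j\ne G_{j+1}$ in the lower-numbering ramification filtration. $(\sigma\pm1)\alpha=\sigma(\alpha)\pm\alpha$. *)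

theory Defs
  imports Main
begin

text \<open>A normalized discrete valuation on a field, given on nonzero elements
  (the value at 0 is irrelevant and never used).\<close>
definition normalized_discrete_valuation :: "('a::field \<Rightarrow> int) \<Rightarrow> bool" where
  "normalized_discrete_valuation v \<longleftrightarrow>
     (\<forall>x y. x \<noteq> 0 \<longrightarrow> y \<noteq> 0 \<longrightarrow> v (x * y) = v x + v y) \<and>
     (\<forall>x y. x \<noteq> 0 \<longrightarrow> y \<noteq> 0 \<longrightarrow> x + y \<noteq> 0 \<longrightarrow> v (x + y) \<ge> min (v x) (v y)) \<and>
     (\<exists>\<pi>. \<pi> \<noteq> 0 \<and> v \<pi> = 1)"

definition val_integral :: "('a::field \<Rightarrow> int) \<Rightarrow> 'a \<Rightarrow> bool" where
  "val_integral v x \<longleftrightarrow> x = 0 \<or> v x \<ge> 0"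

definition val_close :: "('a::field \<Rightarrow> int) \<Rightarrow> int \<Rightarrow> 'a \<Rightarrow> 'a \<Rightarrow> bool" where
  "val_close v N x y \<longleftrightarrow> x = y \<or> v (x - y) \<ge> N"

definition val_complete :: "('a::field \<Rightarrow> int) \<Rightarrow> bool" where
  "val_complete v \<longleftrightarrow>
     (\<forall>s::nat \<Rightarrow> 'a. (\<forall>N. \<exists>M. \<forall>m\<ge>M. \<forall>n\<ge>M. val_close v N (s m) (s n)) \<longrightarrow>
        (\<exists>L. \<forall>N. \<exists>M. \<forall>n\<ge>M. val_close v N (s n) L))"

definition finite_residue_field :: "('a::field \<Rightarrow> int) \<Rightarrow> bool" where
  "finite_residue_field v \<longleftrightarrow>
     (\<exists>R. finite R \<and> R \<subseteq> {x. val_integral v x} \<and>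
        (\<forall>x. val_integral v x \<longrightarrow> (\<exists>r\<in>R. val_close v 1 x r)))"

text \<open>A field of characteristic 0, complete for a normalized discrete valuation with
  finite residue field of characteristic 2: exactly a finite extension of Q_2.\<close>
definition finite_ext_Q2 :: "('a::field_char_0 \<Rightarrow> int) \<Rightarrow> bool" where
  "finite_ext_Q2 v \<longleftrightarrow> normalized_discrete_valuation v \<and> val_complete v \<and>
     finite_residue_field v \<and> v 2 > 0"

definition field_automorphism :: "('a::field \<Rightarrow> 'a) \<Rightarrow> bool" where
  "field_automorphism \<sigma> \<longleftrightarrow> bij \<sigma> \<and> (\<forall>x y. \<sigma> (x + y) = \<sigma> x + \<sigma> y) \<and>
     (\<forall>x y. \<sigma> (x * y) = \<sigma> x * \<sigma> y)"

definition fixed_field :: "('a \<Rightarrow> 'a) \<Rightarrow> 'a set" where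
  "fixed_field \<tau> = {x. \<tau> x = x}"

definition lower_ram_group :: "('a::field \<Rightarrow> 'a) \<Rightarrow> ('a \<Rightarrow> int) \<Rightarrow> int \<Rightarrow> ('a \<Rightarrow> 'a) set" where
  "lower_ram_group \<sigma> v j = {g \<in> {\<sigma> ^^ k | k. k < 4}.
      \<forall>x. val_integral v x \<longrightarrow> val_close v (j + 1) (g x) x}"

definition lower_breaks :: "('a::field \<Rightarrow> 'a) \<Rightarrow> ('a \<Rightarrow> int) \<Rightarrow> int set" where
  "lower_breaks \<sigma> v = {j. j \<ge> 1 \<and> lower_ram_group \<sigma> v j \<noteq> lower_ram_group \<sigma> v (j + 1)}"

end

theory Submission
  imports Defs
begin

text \<open>
  The breaks say that \<open>\<sigma>\<close>
  lies in \<open>G(e0)\<close> but not in \<open>G(e0 + 1)\<close>, and \<open>\<sigma>\<^sup>2\<close> in \<open>G(3 e0)\<close> but not in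
  \<open>G(3 e0 + 1)\<close>. As \<open>\<sigma>\<close> acts trivially on the finite, hence perfect, residue field, these
  levels are attained on a uniformizer. Hence \<open>v ((\<sigma> - 1) x) \<ge> v x + e0\<close> and
  \<open>v ((\<sigma>\<^sup>2 - 1) x) \<ge> v x + 3 e0\<close>, with equality for odd \<open>v x\<close>, and
  \<open>v ((\<sigma> - 1) x) \<ge> v x + 2 e0\<close> on \<open>K1\<close>.

  For odd \<open>a = v \<alpha>\<close> and \<open>c\<close> in \<open>K0\<close> (resp. \<open>K1\<close>) let \<open>y = (\<sigma> - 1) \<alpha> - c\<close>. Since
  \<open>(\<sigma> - 1) y\<close> (resp. \<open>(\<sigma>\<^sup>2 - 1) y\<close>) has valuation \<open>a + 3 e0\<close> (resp. \<open>a + 5 e0\<close>,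
  using \<open>a \<equiv> e0 mod 4\<close>), we get \<open>v y \<le> a + 2 e0\<close>, with equality as soon as \<open>v y\<close> is
  odd. While \<open>v y\<close> is even it can be raised: in the \<open>K1\<close> case by changing \<open>c\<close> by an element
  of \<open>K1\<close>; in the \<open>K0\<close> case by changing \<open>c\<close> by an element of \<open>K0\<close> if \<open>4\<close> divides
  \<open>v y\<close>, and otherwise by changing \<open>\<alpha>\<close> by some \<open>b\<close> with \<open>(\<sigma> - 1) b\<close> close to \<open>y\<close>.
  Finally \<open>\<rho> = y\<close>, resp. \<open>\<rho> = y + 2 \<alpha>\<close>.
\<close>

section \<open>Field automorphisms\<close>

lemma field_automorphism_add: "field_automorphism g \<Longrightarrow> g (x + y) = g x + g y"
  and field_automorphism_mult: "field_automorphism g \<Longrightarrow> g (x * y) = g x * g y"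
  by (simp_all add: field_automorphism_def)

lemma field_automorphism_0: "field_automorphism g \<Longrightarrow> g 0 = 0"
  using field_automorphism_add[of g 0 0] by (metis add.right_neutral add_left_cancel)

lemma field_automorphism_eq_0_iff: "field_automorphism g \<Longrightarrow> g x = 0 \<longleftrightarrow> x = 0"
  by (metis bij_is_inj field_automorphism_0 field_automorphism_def injD)

lemma field_automorphism_1: "field_automorphism g \<Longrightarrow> g 1 = 1"
  using field_automorphism_mult[of g 1 1] field_automorphism_eq_0_iff[of g 1] by simp

lemma field_automorphism_uminus: "field_automorphism g \<Longrightarrow> g (- x) = - g x"
  using field_automorphism_add[of g x "- x"] field_automorphism_0[of g]
  by (metis add.right_inverse minus_unique)

lemma field_automorphism_diff: "field_automorphism g \<Longrightarrow> g (x - y) = g x - g y"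
  using field_automorphism_add[of g x "- y"] field_automorphism_uminus[of g y] by simp

lemma field_automorphism_inject: "field_automorphism g \<Longrightarrow> g x = g y \<longleftrightarrow> x = y"
  by (metis bij_is_inj field_automorphism_def injD)

lemma field_automorphism_inverse:
  assumes "field_automorphism g" shows "g (inverse x) = inverse (g x)"
proof (cases "x = 0")
  case False
  then have "g x * g (inverse x) = 1"
    using assms by (metis field_automorphism_1 field_automorphism_mult right_inverse)
  then show ?thesis by (metis inverse_unique)
qed (simp add: assms field_automorphism_0)

lemma field_automorphism_divide: "field_automorphism g \<Longrightarrow> g (x / y) = g x / g y"
  by (simp add: divide_inverse field_automorphism_mult field_automorphism_inverse)

lemma field_automorphism_power: "field_automorphism g \<Longrightarrow> g (x ^ n) = g x ^ n"
  by (induction n) (simp_all add: field_automorphism_1 field_automorphism_mult)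

lemma field_automorphism_power_int: "field_automorphism g \<Longrightarrow> g (x powi k) = g x powi k"
  by (cases k rule: int_cases4)
    (simp_all add: power_int_minus field_automorphism_power field_automorphism_inverse)

lemma field_automorphism_of_nat: "field_automorphism g \<Longrightarrow> g (of_nat n) = of_nat n"
  by (induction n) (simp_all add: field_automorphism_0 field_automorphism_1 field_automorphism_add)

lemma field_automorphism_funpow: "field_automorphism g \<Longrightarrow> field_automorphism (g ^^ n)"
  by (induction n) (auto simp: field_automorphism_def intro: bij_comp)

lemma field_automorphism_numeral: "field_automorphism g \<Longrightarrow> g (numeral n) = numeral n"
  using field_automorphism_of_nat[of g "numeral n"] by simp

lemma funpow_less_4_eq: "{f ^^ k | k. k < (4::nat)} = {id, f, f ^^ 2, f ^^ 3}"
proof -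
  have "{f ^^ k | k. k < (4::nat)} = (\<lambda>k. f ^^ k) ` {0, 1, 2, 3}"
    by (auto simp del: funpow.simps simp add: image_iff less_Suc_eq numeral_eq_Suc)
  then show ?thesis by simp
qed

lemma funpow_3_funpow_3: "f ^^ 4 = id \<Longrightarrow> (f ^^ 3) ^^ 3 = f"
proof -
  assume "f ^^ 4 = id"
  have "(f ^^ 3) ^^ 3 = f ^^ (1 + 4 + 4)" by (simp add: funpow_mult)
  then show ?thesis using \<open>f ^^ 4 = id\<close> by (simp only: funpow_add) simp
qed

section \<open>Discrete valuations\<close>

locale discrete_valuation =
  fixes v :: "'a::field \<Rightarrow> int"
  assumes normalized: "normalized_discrete_valuation v"
begin

definition val_ge :: "int \<Rightarrow> 'a \<Rightarrow> bool" where
  "val_ge n x \<longleftrightarrow> x = 0 \<or> n \<le> v x"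

lemma v_mult: "x \<noteq> 0 \<Longrightarrow> y \<noteq> 0 \<Longrightarrow> v (x * y) = v x + v y"
  and v_add: "x \<noteq> 0 \<Longrightarrow> y \<noteq> 0 \<Longrightarrow> x + y \<noteq> 0 \<Longrightarrow> min (v x) (v y) \<le> v (x + y)"
  and exists_uniformizer: "\<exists>\<pi>. \<pi> \<noteq> 0 \<and> v \<pi> = 1"
  using normalized by (auto simp: normalized_discrete_valuation_def)

lemma v_1 [simp]: "v 1 = 0"
  using v_mult[of 1 1] by simp

lemma v_uminus [simp]: "v (- x) = v x"
proof (cases "x = 0")
  case False
  have "v (- 1) = 0" using v_mult[of "- 1" "- 1"] by simp
  then show ?thesis using v_mult[of "- 1" x] False by simp
qed simp

lemma v_minus_commute: "v (x - y) = v (y - x)"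
  by (metis minus_diff_eq v_uminus)

lemma v_inverse: "x \<noteq> 0 \<Longrightarrow> v (inverse x) = - v x"
  using v_mult[of x "inverse x"] by simp

lemma v_divide: "x \<noteq> 0 \<Longrightarrow> y \<noteq> 0 \<Longrightarrow> v (x / y) = v x - v y"
  by (simp add: divide_inverse v_mult v_inverse)

lemma v_power: "x \<noteq> 0 \<Longrightarrow> v (x ^ n) = int n * v x"
  by (induction n) (simp_all add: v_mult algebra_simps)

lemma v_power_int: "x \<noteq> 0 \<Longrightarrow> v (x powi k) = k * v x"
  by (cases k rule: int_cases4) (simp_all add: power_int_minus v_inverse v_power)

lemma val_ge_0 [simp]: "val_ge n 0"
  by (simp add: val_ge_def)

lemma val_ge_self: "val_ge (v x) x"
  by (simp add: val_ge_def)

lemma val_ge_iff: "x \<noteq> 0 \<Longrightarrow> val_ge n x \<longleftrightarrow> n \<le> v x"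
  by (simp add: val_ge_def)

lemma val_ge_mono: "val_ge n x \<Longrightarrow> m \<le> n \<Longrightarrow> val_ge m x"
  by (auto simp: val_ge_def)

lemma val_ge_uminus [simp]: "val_ge n (- x) \<longleftrightarrow> val_ge n x"
  by (simp add: val_ge_def)

lemma val_ge_minus_commute: "val_ge n (x - y) \<longleftrightarrow> val_ge n (y - x)"
  by (metis minus_diff_eq val_ge_uminus)

lemma val_ge_add: "val_ge n x \<Longrightarrow> val_ge n y \<Longrightarrow> val_ge n (x + y)"
  unfolding val_ge_def using v_add[of x y] by fastforce

lemma val_ge_diff: "val_ge n x \<Longrightarrow> val_ge n y \<Longrightarrow> val_ge n (x - y)"
  using val_ge_add[of n x "- y"] by simp

lemma val_ge_mult: "val_ge m x \<Longrightarrow> val_ge n y \<Longrightarrow> val_ge (m + n) (x * y)"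
  by (cases "x = 0 \<or> y = 0") (auto simp: val_ge_def v_mult)

lemma val_ge_0_mult: "val_ge 0 x \<Longrightarrow> val_ge 0 y \<Longrightarrow> val_ge 0 (x * y)"
  using val_ge_mult[of 0 x 0 y] by simp

lemma val_ge_mult_left: "val_ge n y \<Longrightarrow> val_ge (v x + n) (x * y)"
  using val_ge_mult[OF val_ge_self] .

lemma val_ge_one: "n \<le> 0 \<Longrightarrow> val_ge n 1"
  by (simp add: val_ge_def)

lemma val_integral_iff: "val_integral v x \<longleftrightarrow> val_ge 0 x"
  by (simp add: val_integral_def val_ge_def)

lemma val_close_iff: "val_close v n x y \<longleftrightarrow> val_ge n (x - y)"
  by (simp add: val_close_def val_ge_def)

lemma v_add_dominant:
  assumes x: "x \<noteq> 0" and y: "val_ge (v x + 1) y"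
  shows "x + y \<noteq> 0" "v (x + y) = v x"
proof -
  have "x + y \<noteq> 0 \<and> v (x + y) = v x"
  proof (cases "y = 0")
    case False
    then have lt: "v x < v y" using y by (simp add: val_ge_def)
    then have ne: "x + y \<noteq> 0" by (metis add_eq_0_iff v_uminus less_irrefl)
    have "min (v (x + y)) (v (- y)) \<le> v (x + y + - y)"
      using v_add[of "x + y" "- y"] ne False x by simp
    then show ?thesis using v_add[of x y] ne False x lt by simp
  qed (simp add: x)
  then show "x + y \<noteq> 0" "v (x + y) = v x" by simp_all
qed

lemma v_diff_dominant:
  assumes "x \<noteq> 0" "val_ge (v x + 1) y"
  shows "x - y \<noteq> 0" "v (x - y) = v x"
  using v_add_dominant[of x "- y"] assms by simp_all

definition higher_unit :: "int \<Rightarrow> 'a \<Rightarrow> bool" where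
  "higher_unit n w \<longleftrightarrow> val_ge n (w - 1)"

lemma higher_unit_1 [simp]: "higher_unit n 1"
  by (simp add: higher_unit_def)

lemma higher_unit_mono: "higher_unit n w \<Longrightarrow> m \<le> n \<Longrightarrow> higher_unit m w"
  unfolding higher_unit_def by (rule val_ge_mono)

lemma higher_unit_unit:
  assumes "1 \<le> n" "higher_unit n w" shows "w \<noteq> 0" "v w = 0"
  using v_add_dominant[of 1 "w - 1"] assms val_ge_mono
  by (simp_all add: higher_unit_def)

lemma higher_unit_mult:
  assumes "1 \<le> n" "higher_unit n w" "higher_unit n z" shows "higher_unit n (w * z)"
proof -
  have "w * z - 1 = (w - 1) * (z - 1) + (w - 1) + (z - 1)" by (simp add: algebra_simps)
  moreover have "val_ge n ((w - 1) * (z - 1))"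
    using val_ge_mult[of n "w - 1" n "z - 1"] assms val_ge_mono by (force simp: higher_unit_def)
  ultimately show ?thesis using assms val_ge_add by (metis higher_unit_def)
qed

lemma higher_unit_inverse:
  assumes "1 \<le> n" "higher_unit n w" shows "higher_unit n (inverse w)"
proof -
  have w: "w \<noteq> 0" "v w = 0" using higher_unit_unit[OF assms] by simp_all
  then have "inverse w - 1 = inverse w * (1 - w)" by (simp add: field_simps)
  then show ?thesis
    using val_ge_mult_left[of n "1 - w" "inverse w"] assms w
    by (simp add: higher_unit_def v_inverse val_ge_minus_commute)
qed

lemma higher_unit_power_int:
  assumes "1 \<le> n" "higher_unit n w" shows "higher_unit n (w powi k)"
proof -
  have "higher_unit n (w ^ m)" for m
    by (induction m) (simp_all add: higher_unit_mult[OF assms(1)] assms(2))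
  then show ?thesis
    by (cases k rule: int_cases4) (simp_all add: power_int_minus higher_unit_inverse assms(1))
qed

lemma higher_unit_quotient_iff:
  assumes "x \<noteq> 0" shows "higher_unit n (y / x) \<longleftrightarrow> val_ge (v x + n) (y - x)"
proof (cases "y = x")
  case False
  have "y / x - 1 = (y - x) / x" using assms by (simp add: field_simps)
  then show ?thesis using assms False by (auto simp: higher_unit_def val_ge_def v_divide)
qed (simp add: assms)

lemma uniformizer_power_int_times_unit:
  assumes "\<pi> \<noteq> 0" "v \<pi> = 1" "x \<noteq> 0"
  obtains u where "u \<noteq> 0" "v u = 0" "x = \<pi> powi v x * u"
  using assms by (intro that[of "x / \<pi> powi v x"]) (simp_all add: v_divide v_power_int)

section \<open>Ramification groups\<close>

definition in_ram_group :: "int \<Rightarrow> ('a \<Rightarrow> 'a) \<Rightarrow> bool" where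
  "in_ram_group j g \<longleftrightarrow> (\<forall>x. val_ge 0 x \<longrightarrow> val_ge (j + 1) (g x - x))"

lemma lower_ram_group_eq:
  "lower_ram_group \<sigma> v j = {g \<in> {\<sigma> ^^ k | k. k < 4}. in_ram_group j g}"
  by (simp add: lower_ram_group_def in_ram_group_def val_integral_def val_close_iff val_ge_def)

lemma in_ram_group_mono: "in_ram_group j g \<Longrightarrow> i \<le> j \<Longrightarrow> in_ram_group i g"
  unfolding in_ram_group_def by (meson add_right_mono val_ge_mono)

lemma in_ram_group_id: "in_ram_group j id"
  by (simp add: in_ram_group_def)

lemma in_ram_group_comp:
  assumes "0 \<le> j" "in_ram_group j g" "in_ram_group j h" shows "in_ram_group j (g \<circ> h)"
  unfolding in_ram_group_def
proof (intro allI impI)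
  fix x assume x: "val_ge 0 x"
  have hx: "val_ge (j + 1) (h x - x)" using assms(3) x by (simp add: in_ram_group_def)
  then have "val_ge 0 (h x)"
    using val_ge_add[OF x, of "h x - x"] val_ge_mono assms(1) by fastforce
  then have "val_ge (j + 1) (g (h x) - h x)" using assms(2) by (simp add: in_ram_group_def)
  then show "val_ge (j + 1) ((g \<circ> h) x - x)" using val_ge_add[OF _ hx] by fastforce
qed

lemma in_ram_group_funpow: "0 \<le> j \<Longrightarrow> in_ram_group j g \<Longrightarrow> in_ram_group j (g ^^ k)"
  by (induction k) (simp_all add: in_ram_group_id in_ram_group_comp)

lemma exists_not_in_ram_group:
  assumes g: "field_automorphism g" "g \<noteq> id" shows "\<exists>j. \<not> in_ram_group j g"
proof -
  have "\<exists>x. val_ge 0 x \<and> g x \<noteq> x"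
  proof (rule ccontr)
    assume fixes_integral: "\<nexists>x. val_ge 0 x \<and> g x \<noteq> x"
    have "g x = x" for x
    proof (cases "val_ge 0 x")
      case False
      then have "val_ge 0 (inverse x)" by (auto simp: val_ge_def v_inverse)
      then show ?thesis
        using fixes_integral field_automorphism_inverse[OF g(1)] by (metis inverse_inverse_eq)
    qed (use fixes_integral in blast)
    then show False using g(2) by auto
  qed
  then obtain x where "val_ge 0 x" "g x \<noteq> x" by blast
  then have "\<not> in_ram_group (v (g x - x)) g" by (auto simp: in_ram_group_def val_ge_def)
  then show ?thesis by blast
qed

lemma v_automorphism:
  assumes g: "field_automorphism g" "in_ram_group 1 g" and x: "x \<noteq> 0"
  shows "v (g x) = v x"
proof -
  obtain \<pi> where \<pi>: "\<pi> \<noteq> 0" "v \<pi> = 1" using exists_uniformizer by blast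
  obtain u where u: "u \<noteq> 0" "v u = 0" "x = \<pi> powi v x * u"
    using uniformizer_power_int_times_unit[OF \<pi> x] .
  have close: "val_ge (v y + 1) (g y - y)" if "y \<noteq> 0" "0 \<le> v y" "v y \<le> 1" for y
  proof -
    have "val_ge 2 (g y - y)" using g(2) that by (simp add: in_ram_group_def val_ge_def)
    then show ?thesis using that(3) val_ge_mono by fastforce
  qed
  have "v (g \<pi>) = 1" "v (g u) = 0"
    using v_add_dominant(2)[OF _ close, of \<pi>] v_add_dominant(2)[OF _ close, of u] \<pi> u by simp_all
  moreover have "g x = g \<pi> powi v x * g u"
    using u(3) g(1) by (metis field_automorphism_mult field_automorphism_power_int)
  ultimately show ?thesis
    using \<pi> u g(1) by (simp add: v_mult v_power_int field_automorphism_eq_0_iff)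
qed

lemma val_ge_automorphism_iff:
  "field_automorphism g \<Longrightarrow> in_ram_group 1 g \<Longrightarrow> val_ge n (g x) \<longleftrightarrow> val_ge n x"
  by (cases "x = 0") (simp_all add: val_ge_def v_automorphism field_automorphism_eq_0_iff)

lemma higher_unit_automorphism_quotient:
  assumes g: "field_automorphism g" and n: "1 \<le> n" and "P \<noteq> 0" "u \<noteq> 0"
    and "higher_unit n (g P / P)" "higher_unit n (g u / u)"
  shows "higher_unit n (g (P powi k * u) / (P powi k * u))"
proof -
  have "g (P powi k * u) / (P powi k * u) = (g P / P) powi k * (g u / u)"
    using g by (simp add: field_automorphism_mult field_automorphism_power_int
        power_int_divide_distrib)
  then show ?thesis using assms by (metis higher_unit_mult higher_unit_power_int)
qed

lemma in_ram_group_val_ge_diff: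
  assumes g: "field_automorphism g" "in_ram_group i g" and i: "1 \<le> i" and x: "x \<noteq> 0"
  shows "val_ge (v x + i) (g x - x)"
proof -
  obtain \<pi> where \<pi>: "\<pi> \<noteq> 0" "v \<pi> = 1" using exists_uniformizer by blast
  obtain u where u: "u \<noteq> 0" "v u = 0" "x = \<pi> powi v x * u"
    using uniformizer_power_int_times_unit[OF \<pi> x] .
  have "higher_unit i (g \<pi> / \<pi>)" "higher_unit (i + 1) (g u / u)"
    using g(2) \<pi> u
    by (simp_all add: in_ram_group_def higher_unit_quotient_iff val_ge_def add.commute)
  then have "higher_unit i (g (\<pi> powi v x * u) / (\<pi> powi v x * u))"
    using higher_unit_automorphism_quotient[OF g(1) i \<pi>(1) u(1)] higher_unit_mono by simp
  then have "higher_unit i (g x / x)" using u(3) by simp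
  then show ?thesis using x by (simp add: higher_unit_quotient_iff)
qed

text \<open>For odd \<open>v x\<close>, \<open>g x / x\<close> and \<open>g \<pi> / \<pi> = 1 + \<epsilon>\<close> differ by a higher unit of level
  \<open>i + 1\<close>, since \<open>(1 + \<epsilon>)\<^sup>2 = 1 + 2 \<epsilon> + \<epsilon>\<^sup>2\<close> is one (the residue characteristic is 2).\<close>
lemma in_ram_group_v_diff_odd:
  assumes g: "field_automorphism g" "in_ram_group i g" and i: "1 \<le> i"
    and \<pi>: "\<pi> \<noteq> 0" "v \<pi> = 1" "g \<pi> - \<pi> \<noteq> 0" "v (g \<pi> - \<pi>) = i + 1"
    and two: "val_ge 1 2" and x: "x \<noteq> 0" "odd (v x)"
  shows "g x - x \<noteq> 0" "v (g x - x) = v x + i"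
proof -
  obtain u where u: "u \<noteq> 0" "v u = 0" "x = \<pi> powi v x * u"
    using uniformizer_power_int_times_unit[OF \<pi>(1,2) x(1)] .
  obtain m where m: "v x = 2 * m + 1" using x(2) by (metis oddE)
  define \<epsilon> where "\<epsilon> = g \<pi> / \<pi> - 1"
  have "\<epsilon> = (g \<pi> - \<pi>) / \<pi>" using \<pi> by (simp add: \<epsilon>_def field_simps)
  then have \<epsilon>: "\<epsilon> \<noteq> 0" "v \<epsilon> = i" using \<pi> by (simp_all add: v_divide)
  have sq: "higher_unit (i + 1) ((1 + \<epsilon>) ^ 2)"
  proof -
    have "(1 + \<epsilon>) ^ 2 - 1 = 2 * \<epsilon> + \<epsilon> * \<epsilon>" by (simp add: algebra_simps power2_eq_square)
    moreover have "val_ge (1 + i) (2 * \<epsilon>)" using val_ge_mult[OF two val_ge_self[of \<epsilon>]] \<epsilon> by simp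
    moreover have "val_ge (i + 1) (\<epsilon> * \<epsilon>)"
      using val_ge_mono[OF val_ge_mult[OF val_ge_self val_ge_self]] \<epsilon> i by simp
    ultimately show ?thesis by (simp add: higher_unit_def val_ge_add add.commute)
  qed
  have "higher_unit (i + 1) (g u / u)"
    using g(2) u by (simp add: in_ram_group_def higher_unit_quotient_iff val_ge_def)
  then have w: "higher_unit (i + 1) (((1 + \<epsilon>) ^ 2) powi m * (g u / u))"
    using i sq by (intro higher_unit_mult higher_unit_power_int) simp_all
  have "g x / x = (1 + \<epsilon>) * (((1 + \<epsilon>) ^ 2) powi m * (g u / u))"
    using g(1) \<pi> u m
    by (simp add: \<epsilon>_def field_automorphism_mult field_automorphism_power_int
        power_int_divide_distrib power_int_power power_int_add field_simps)
  then have q: "g x / x - 1 = \<epsilon> + (1 + \<epsilon>) * (((1 + \<epsilon>) ^ 2) powi m * (g u / u) - 1)"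
    by (simp add: algebra_simps)
  have "val_ge (v \<epsilon> + 1) ((1 + \<epsilon>) * (((1 + \<epsilon>) ^ 2) powi m * (g u / u) - 1))"
    using val_ge_mult[of 0 "1 + \<epsilon>" "i + 1"] w \<epsilon> i
    by (simp add: higher_unit_def val_ge_add val_ge_one val_ge_iff)
  then have "g x / x - 1 \<noteq> 0" "v (g x / x - 1) = i"
    using v_add_dominant[OF \<epsilon>(1)] \<epsilon>(2) unfolding q by simp_all
  moreover have "g x - x = x * (g x / x - 1)" using x by (simp add: field_simps)
  ultimately show "g x - x \<noteq> 0" "v (g x - x) = v x + i" using x by (simp_all add: v_mult)
qed

lemma val_ge_diff_of_uniformizer:
  assumes \<tau>: "field_automorphism \<tau>"
    and expand: "\<And>x. x \<in> S \<Longrightarrow> val_ge 0 x \<Longrightarrow> \<exists>r y. \<tau> r = r \<and> y \<in> S \<and> val_ge 0 y \<and> x = r + P * y"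
    and integral: "\<And>y. y \<in> S \<Longrightarrow> val_ge 0 y \<Longrightarrow> val_ge 0 (\<tau> y)"
    and P: "val_ge 1 P" "val_ge j (\<tau> P - P)"
    and x: "x \<in> S" "val_ge 0 x"
  shows "val_ge j (\<tau> x - x)"
proof -
  have "\<forall>x\<in>S. val_ge 0 x \<longrightarrow> val_ge (min (int N) j) (\<tau> x - x)" for N
  proof (induction N)
    case 0
    show ?case using val_ge_diff[OF integral] val_ge_mono by fastforce
  next
    case (Suc N)
    show ?case
    proof (intro ballI impI)
      fix x assume "x \<in> S" "val_ge 0 x"
      then obtain r y where ry: "\<tau> r = r" "y \<in> S" "val_ge 0 y" "x = r + P * y"
        using expand by blast
      have "\<tau> x - x = (\<tau> P - P) * \<tau> y + P * (\<tau> y - y)"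
        using ry \<tau> by (simp add: field_automorphism_add field_automorphism_mult algebra_simps)
      moreover have "val_ge (min (int (Suc N)) j) ((\<tau> P - P) * \<tau> y)"
        using val_ge_mult[OF P(2) integral[OF ry(2,3)]] val_ge_mono by fastforce
      moreover have "val_ge (min (int (Suc N)) j) (P * (\<tau> y - y))"
        using val_ge_mult[OF P(1)] Suc.IH ry(2,3) val_ge_mono by fastforce
      ultimately show "val_ge (min (int (Suc N)) j) (\<tau> x - x)" by (simp add: val_ge_add)
    qed
  qed
  from this[of "nat j"] show ?thesis using x by (cases "0 \<le> j") auto
qed

section \<open>The residue field\<close>

lemma val_ge_power: "val_ge 0 x \<Longrightarrow> val_ge 0 (x ^ n)"
  by (induction n) (simp_all add: val_ge_one val_ge_0_mult)

lemma residue_mult_cong: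
  assumes "val_ge 0 a" "val_ge 0 d" "val_ge 1 (a - b)" "val_ge 1 (c - d)"
  shows "val_ge 1 (a * c - b * d)"
proof -
  have "a * c - b * d = a * (c - d) + (a - b) * d" by (simp add: algebra_simps)
  then show ?thesis using val_ge_mult[OF assms(1,4)] val_ge_mult[OF assms(3,2)] val_ge_add by simp
qed

lemma residue_power_cong:
  assumes "val_ge 0 a" "val_ge 0 b" "val_ge 1 (a - b)" shows "val_ge 1 (a ^ n - b ^ n)"
  by (induction n) (simp_all add: residue_mult_cong assms val_ge_power)

lemma residue_square_cancel:
  assumes two: "val_ge 1 2" and "val_ge 0 a" "val_ge 0 b" "val_ge 1 (a ^ 2 - b ^ 2)"
  shows "val_ge 1 (a - b)"
proof (cases "a = b")
  case False
  have "(a - b) ^ 2 = (a ^ 2 - b ^ 2) - 2 * b * (a - b)"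
    by (simp add: algebra_simps power2_eq_square)
  moreover have "val_ge 1 (2 * b * (a - b))"
    using val_ge_mult[OF val_ge_mult[OF two assms(3)] val_ge_diff[OF assms(2,3)]] by simp
  ultimately have "val_ge 1 ((a - b) ^ 2)" using assms(4) val_ge_diff by simp
  then show ?thesis using False by (simp add: val_ge_def v_power)
qed simp

lemma residue_power_two_cancel:
  assumes "val_ge 1 2" "val_ge 0 x" "val_ge 1 (x ^ 2 ^ n - x ^ 2 ^ (n + k))"
  shows "val_ge 1 (x - x ^ 2 ^ k)"
  using assms(3)
proof (induction n)
  case (Suc n)
  then show ?case
    using residue_square_cancel[OF assms(1) val_ge_power val_ge_power, OF assms(2) assms(2)]
    by (simp add: power_mult[symmetric] mult.commute)
qed simp

lemma residue_power_two_periodic: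
  assumes fin: "finite_residue_field v" and two: "val_ge 1 2" and x: "val_ge 0 x"
  obtains m where "1 \<le> m" "val_ge 1 (x - x ^ 2 ^ m)"
proof -
  obtain R where R: "finite R" "\<And>y. val_ge 0 y \<Longrightarrow> \<exists>r\<in>R. val_ge 1 (y - r)"
    using fin by (auto simp: finite_residue_field_def val_integral_iff val_close_iff)
  have "\<forall>n. \<exists>r. r \<in> R \<and> val_ge 1 (x ^ 2 ^ n - r)"
    using R(2)[OF val_ge_power[OF x]] by blast
  then obtain f where f: "\<And>n. f n \<in> R \<and> val_ge 1 (x ^ 2 ^ n - f n)" by metis
  have "range f \<subseteq> R" using f by blast
  then have "\<not> inj f" using finite_imageD[of f UNIV] finite_subset[OF _ R(1)] by auto
  then obtain n m where "n < m" "f n = f m"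
    unfolding inj_def by (metis linorder_neq_iff)
  then have "val_ge 1 (x ^ 2 ^ n - x ^ 2 ^ (n + (m - n)))"
    using val_ge_diff[OF conjunct2[OF f[of n]] conjunct2[OF f[of m]]] by simp
  then show ?thesis
    using that[of "m - n"] residue_power_two_cancel[OF two x] \<open>n < m\<close> by fastforce
qed

lemma residue_power_two_root:
  assumes fin: "finite_residue_field v" and two: "val_ge 1 2" and x: "val_ge 0 x"
  obtains z where "val_ge 0 z" "val_ge 1 (x - z ^ 2 ^ k)"
proof -
  obtain m where m: "1 \<le> m" "val_ge 1 (x - x ^ 2 ^ m)"
    using residue_power_two_periodic[OF assms] .
  have periodic: "val_ge 1 (x - x ^ 2 ^ (m * j))" for j
  proof (induction j)
    case (Suc j)
    have "val_ge 1 (x ^ 2 ^ m - (x ^ 2 ^ (m * j)) ^ 2 ^ m)"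
      using residue_power_cong[OF x val_ge_power[OF x] Suc] .
    moreover have "(x ^ 2 ^ (m * j)) ^ 2 ^ m = x ^ 2 ^ (m * Suc j)"
      by (simp add: power_mult[symmetric] power_add[symmetric] add.commute)
    ultimately show ?case using val_ge_add[OF m(2)] by fastforce
  qed simp
  have "(x ^ 2 ^ (m * k - k)) ^ 2 ^ k = x ^ 2 ^ (m * k)"
    using m(1) by (simp add: power_mult[symmetric] power_add[symmetric])
  then show ?thesis
    using that[OF val_ge_power[OF x]] periodic[of k] by metis
qed

section \<open>Lower ramification groups of a cyclic group of order 4\<close>

lemma lower_ram_group_iff:
  "g \<in> lower_ram_group \<sigma> v j \<longleftrightarrow> g \<in> {id, \<sigma>, \<sigma> ^^ 2, \<sigma> ^^ 3} \<and> in_ram_group j g"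
  by (simp add: lower_ram_group_eq funpow_less_4_eq)

lemma lower_ram_group_antimono: "lower_ram_group \<sigma> v (j + 1) \<subseteq> lower_ram_group \<sigma> v j"
  using in_ram_group_mono by (force simp: lower_ram_group_iff)

lemma lower_ram_group_const:
  assumes "1 \<le> i" "i \<le> j" and no_break: "\<And>k. i \<le> k \<Longrightarrow> k < j \<Longrightarrow> k \<notin> lower_breaks \<sigma> v"
  shows "lower_ram_group \<sigma> v j = lower_ram_group \<sigma> v i"
proof -
  have "k \<le> j \<longrightarrow> lower_ram_group \<sigma> v k = lower_ram_group \<sigma> v i" if "i \<le> k" for k
    using that
  proof (induction k rule: int_ge_induct)
    case (step k)
    then show ?case using no_break[of k] \<open>1 \<le> i\<close> by (auto simp: lower_breaks_def)
  qed simp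
  then show ?thesis using \<open>i \<le> j\<close> by blast
qed

lemma lower_ram_group_trivial:
  assumes \<sigma>: "field_automorphism \<sigma>" and "1 \<le> j" "\<And>k. j \<le> k \<Longrightarrow> k \<notin> lower_breaks \<sigma> v"
  shows "lower_ram_group \<sigma> v j = {id}"
proof -
  have "g = id" if g: "g \<in> lower_ram_group \<sigma> v j" for g
  proof (rule ccontr)
    assume "g \<noteq> id"
    moreover have "field_automorphism g"
      using g field_automorphism_funpow[OF \<sigma>] by (auto simp: lower_ram_group_eq)
    ultimately obtain N where N: "\<not> in_ram_group N g" using exists_not_in_ram_group by blast
    have "lower_ram_group \<sigma> v (max N j) = lower_ram_group \<sigma> v j"
      using assms(2,3) by (intro lower_ram_group_const) auto
    then have "g \<in> lower_ram_group \<sigma> v (max N j)" using g by (simp only:)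
    then have "in_ram_group (max N j) g" by (simp add: lower_ram_group_iff)
    then show False using N in_ram_group_mono by (meson max.cobounded1)
  qed
  moreover have "id \<in> lower_ram_group \<sigma> v j" by (simp add: lower_ram_group_iff in_ram_group_id)
  ultimately show ?thesis by blast
qed

lemma lower_ram_group_generator:
  assumes "0 \<le> j" "\<sigma> \<in> lower_ram_group \<sigma> v j" shows "lower_ram_group \<sigma> v i \<subseteq> lower_ram_group \<sigma> v j"
proof
  fix g assume "g \<in> lower_ram_group \<sigma> v i"
  then obtain k where "g = \<sigma> ^^ k" "k < 4" by (auto simp: lower_ram_group_eq)
  moreover have "in_ram_group j (\<sigma> ^^ k)"
    using assms in_ram_group_funpow by (simp add: lower_ram_group_iff)
  ultimately show "g \<in> lower_ram_group \<sigma> v j" by (auto simp: lower_ram_group_eq)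
qed

lemma lower_ram_group_cube:
  assumes "\<sigma> ^^ 4 = id" "0 \<le> j" "\<sigma> ^^ 3 \<in> lower_ram_group \<sigma> v j" shows "\<sigma> \<in> lower_ram_group \<sigma> v j"
  using assms in_ram_group_funpow[of j "\<sigma> ^^ 3" 3] funpow_3_funpow_3[OF assms(1)]
  by (simp add: lower_ram_group_iff)

lemma lower_ram_group_subset_Suc:
  assumes "\<sigma> ^^ 4 = id" "0 \<le> j" "\<sigma> \<notin> lower_ram_group \<sigma> v j"
    and "\<sigma> ^^ 2 \<in> lower_ram_group \<sigma> v (j + 1)"
  shows "lower_ram_group \<sigma> v j \<subseteq> lower_ram_group \<sigma> v (j + 1)"
proof
  fix g assume "g \<in> lower_ram_group \<sigma> v j"
  then have "g = id \<or> g = \<sigma> ^^ 2"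
    using assms(3) lower_ram_group_cube[OF assms(1,2)] lower_ram_group_iff[where g = g and j = j]
    by auto
  then show "g \<in> lower_ram_group \<sigma> v (j + 1)"
    using assms(4) in_ram_group_id by (auto simp: lower_ram_group_iff)
qed

lemma ram_groups_of_breaks:
  assumes \<sigma>: "field_automorphism \<sigma>" "\<sigma> ^^ 4 = id" "\<sigma> ^^ 2 \<noteq> id"
    and b: "1 \<le> b" "b < b'" and breaks: "lower_breaks \<sigma> v = {b, b'}"
  shows "in_ram_group b \<sigma>" "\<not> in_ram_group (b + 1) \<sigma>"
    and "in_ram_group b' (\<sigma> ^^ 2)" "\<not> in_ram_group (b' + 1) (\<sigma> ^^ 2)"
proof -
  let ?G = "lower_ram_group \<sigma> v"
  have jump: "?G j \<noteq> ?G (j + 1)" if "j = b \<or> j = b'" for j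
  proof -
    have "j \<in> lower_breaks \<sigma> v" using breaks that by blast
    then show ?thesis by (simp add: lower_breaks_def)
  qed
  have top: "?G (b' + 1) = {id}" using b breaks by (intro lower_ram_group_trivial[OF \<sigma>(1)]) auto
  have mid: "?G b' = ?G (b + 1)" using b breaks by (intro lower_ram_group_const) auto
  have \<sigma>_notin: "\<sigma> \<notin> ?G (b + 1)"
  proof
    assume "\<sigma> \<in> ?G (b + 1)"
    then have "?G b \<subseteq> ?G (b + 1)" using lower_ram_group_generator b by simp
    then show False using jump[of b] lower_ram_group_antimono[of \<sigma> b] by blast
  qed
  have \<sigma>3_notin: "\<sigma> ^^ 3 \<notin> ?G j" if "0 \<le> j" "\<sigma> \<notin> ?G j" for j
    using lower_ram_group_cube[OF \<sigma>(2)] that by blast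
  have "?G b' \<noteq> {id}" "id \<in> ?G b'"
    using jump[of b'] top by (simp_all add: lower_ram_group_iff in_ram_group_id)
  then obtain g where g: "g \<in> ?G (b + 1)" "g \<noteq> id" using mid by blast
  then have "g = \<sigma> ^^ 2"
    using \<sigma>_notin \<sigma>3_notin[of "b + 1"] b lower_ram_group_iff[where g = g and j = "b + 1"] by auto
  then have \<sigma>2: "\<sigma> ^^ 2 \<in> ?G b'" "\<sigma> ^^ 2 \<in> ?G (b + 1)" using g mid by simp_all
  then show "in_ram_group b' (\<sigma> ^^ 2)" and "\<not> in_ram_group (b' + 1) (\<sigma> ^^ 2)"
    using top \<sigma>(3) lower_ram_group_iff[where g = "\<sigma> ^^ 2"] by auto
  show "\<not> in_ram_group (b + 1) \<sigma>" using \<sigma>_notin by (simp add: lower_ram_group_iff)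
  show "in_ram_group b \<sigma>"
  proof (rule ccontr)
    assume "\<not> in_ram_group b \<sigma>"
    then have "?G b \<subseteq> ?G (b + 1)"
      using lower_ram_group_subset_Suc[OF \<sigma>(2)] \<sigma>2(2) b by (simp add: lower_ram_group_iff)
    then show False using jump[of b] lower_ram_group_antimono[of \<sigma> b] by blast
  qed
qed

end

section \<open>Cyclic quartic extensions with breaks \<open>e0\<close> and \<open>3 e0\<close>\<close>

lemma exists_by_bounded_improvement:
  fixes f :: "'b \<Rightarrow> int"
  assumes "P x0" and bounded: "\<And>x. P x \<Longrightarrow> f x \<le> B"
    and improve: "\<And>x. P x \<Longrightarrow> \<not> Q x \<Longrightarrow> \<exists>y. P y \<and> f x < f y"
  shows "\<exists>x. P x \<and> Q x"
proof (rule ccontr)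
  assume none: "\<nexists>x. P x \<and> Q x"
  have "\<not> P x" for x
  proof (induction "nat (B - f x)" arbitrary: x rule: less_induct)
    case less
    show ?case
    proof
      assume "P x"
      then obtain y where "P y" "f x < f y" using improve none by blast
      moreover from this have "nat (B - f y) < nat (B - f x)" using bounded[of y] by simp
      ultimately show False using less by blast
    qed
  qed
  then show False using assms(1) by blast
qed

lemma odd_mod_4_cases:
  fixes a e :: int
  assumes "odd a" "odd e" shows "a mod 4 = e mod 4 \<longleftrightarrow> a mod 4 \<noteq> (3 * e) mod 4"
proof -
  have odd_mod_4: "x mod 4 = 1 \<or> x mod 4 = 3" if "odd x" for x :: int
  proof -
    have "(x mod 4) mod 2 = 1" using that by (simp add: mod_mod_cancel odd_iff_mod_2_eq_one)
    moreover have "0 \<le> x mod 4" "x mod 4 < 4" by simp_all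
    moreover have "y = 0 \<or> y = 1 \<or> y = 2 \<or> y = 3" if "0 \<le> y" "y < 4" for y :: int
      using that by arith
    ultimately show ?thesis by fastforce
  qed
  have "(3 * e) mod 4 = (3 * (e mod 4)) mod 4" by (simp add: mod_mult_right_eq)
  then show ?thesis using odd_mod_4[OF assms(1)] odd_mod_4[OF assms(2)] by auto
qed

locale cyclic_quartic = discrete_valuation v for v :: "'a::field_char_0 \<Rightarrow> int" +
  fixes \<sigma> :: "'a \<Rightarrow> 'a" and e0 :: int
  assumes aut: "field_automorphism \<sigma>" and order_4: "\<sigma> ^^ 4 = id"
    and v_2: "v 2 = 4 * e0" and e0_pos: "1 \<le> e0" and e0_odd: "odd e0"
    and finite_residue: "finite_residue_field v"
    and ram_1: "in_ram_group e0 \<sigma>" and not_ram_1: "\<not> in_ram_group (e0 + 1) \<sigma>"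
    and ram_2: "in_ram_group (3 * e0) (\<sigma> ^^ 2)"
    and not_ram_2: "\<not> in_ram_group (3 * e0 + 1) (\<sigma> ^^ 2)"
begin

lemmas sigma_simps [simp] = field_automorphism_add[OF aut] field_automorphism_mult[OF aut]
  field_automorphism_diff[OF aut] field_automorphism_uminus[OF aut]
  field_automorphism_0[OF aut] field_automorphism_1[OF aut] field_automorphism_numeral[OF aut]
  field_automorphism_inverse[OF aut] field_automorphism_divide[OF aut]
  field_automorphism_power[OF aut] field_automorphism_power_int[OF aut]
  field_automorphism_eq_0_iff[OF aut] field_automorphism_inject[OF aut]

lemma sigma_4 [simp]: "\<sigma> (\<sigma> (\<sigma> (\<sigma> x))) = x"
  using fun_cong[OF order_4, of x] by (simp add: numeral_eq_Suc)

lemma funpow_2_apply [simp]: "(\<sigma> ^^ 2) x = \<sigma> (\<sigma> x)"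
  by (simp add: numeral_2_eq_2)

lemma aut_2: "field_automorphism (\<sigma> ^^ 2)"
  using field_automorphism_funpow[OF aut] .

lemma val_ge_two: "val_ge 1 2"
  using v_2 e0_pos by (simp add: val_ge_def)

lemma v_two_mult: "x \<noteq> 0 \<Longrightarrow> v (2 * x) = v x + 4 * e0"
  by (simp add: v_mult v_2)

lemma val_ge_two_mult: "val_ge n x \<Longrightarrow> val_ge (n + 4 * e0) (2 * x)"
  using val_ge_mult_left[of n x 2] v_2 by (simp add: add.commute)

lemma v_sigma [simp]: "x \<noteq> 0 \<Longrightarrow> v (\<sigma> x) = v x"
  using v_automorphism[OF aut in_ram_group_mono[OF ram_1 e0_pos]] .

lemma val_ge_sigma_iff [simp]: "val_ge n (\<sigma> x) \<longleftrightarrow> val_ge n x"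
  using val_ge_automorphism_iff[OF aut in_ram_group_mono[OF ram_1 e0_pos]] .

text \<open>As \<open>\<sigma>\<close> acts trivially on the residue field, the norm of a fourth root of \<open>x\<close>
  modulo the maximal ideal is a \<open>\<sigma>\<close>-fixed representative of \<open>x\<close>.\<close>
lemma fixed_representative:
  assumes x: "val_ge 0 x"
  obtains r where "\<sigma> r = r" "val_ge 0 r" "val_ge 1 (x - r)"
proof -
  obtain z where z: "val_ge 0 z" "val_ge 1 (x - z ^ 2 ^ 2)"
    using residue_power_two_root[OF finite_residue val_ge_two x] .
  have step: "val_ge 1 (\<sigma> y - z)" if "val_ge 1 (y - z)" for y
  proof -
    have "val_ge 0 y" using val_ge_add[OF z(1), of "y - z"] that val_ge_mono by fastforce
    then have "val_ge 1 (\<sigma> y - y)"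
      using ram_1 e0_pos val_ge_mono by (fastforce simp: in_ram_group_def)
    then show ?thesis using val_ge_add[OF _ that] by fastforce
  qed
  have c1: "val_ge 1 (\<sigma> z - z)" using step[of z] by simp
  have c2: "val_ge 1 (\<sigma> (\<sigma> z) - z)" using step[OF c1] .
  have c3: "val_ge 1 (\<sigma> (\<sigma> (\<sigma> z)) - z)" using step[OF c2] .
  define r where "r = z * \<sigma> z * \<sigma> (\<sigma> z) * \<sigma> (\<sigma> (\<sigma> z))"
  have "\<sigma> r = r" by (simp add: r_def mult_ac)
  moreover have "val_ge 0 r" using z(1) by (simp add: r_def val_ge_0_mult)
  moreover have "val_ge 1 (r - z * z * z * z)"
    unfolding r_def using z(1) by (intro residue_mult_cong c1 c2 c3) (simp_all add: val_ge_0_mult)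
  moreover have "x - r = (x - z ^ 2 ^ 2) - (r - z * z * z * z)" by (simp add: power4_eq_xxxx)
  ultimately show ?thesis using that val_ge_diff[OF z(2)] by metis
qed

lemma v_diff_uniformizer:
  assumes \<tau>: "field_automorphism \<tau>" "fixed_field \<sigma> \<subseteq> fixed_field \<tau>"
    and j: "1 \<le> j" "in_ram_group j \<tau>" "\<not> in_ram_group (j + 1) \<tau>"
    and \<pi>: "\<pi> \<noteq> 0" "v \<pi> = 1"
  shows "\<tau> \<pi> - \<pi> \<noteq> 0" "v (\<tau> \<pi> - \<pi>) = j + 1"
proof -
  have integral: "val_ge 0 (\<tau> y)" if "val_ge 0 y" for y
    using that val_ge_automorphism_iff[OF \<tau>(1) in_ram_group_mono[OF j(2,1)]] by simp
  have expand: "\<exists>r y. \<tau> r = r \<and> y \<in> UNIV \<and> val_ge 0 y \<and> x = r + \<pi> * y" if x: "val_ge 0 x" for x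
  proof -
    obtain r where r: "\<sigma> r = r" "val_ge 1 (x - r)" using fixed_representative[OF x] by blast
    then have "val_ge 0 ((x - r) / \<pi>)"
      using \<pi> by (cases "x = r") (simp_all add: val_ge_def v_divide)
    then show ?thesis
      using r \<tau>(2) \<pi>(1) by (intro exI[of _ r] exI[of _ "(x - r) / \<pi>"]) (auto simp: fixed_field_def)
  qed
  have "in_ram_group (j + 1) \<tau>" if "val_ge (j + 1 + 1) (\<tau> \<pi> - \<pi>)"
    unfolding in_ram_group_def using val_ge_diff_of_uniformizer[OF \<tau>(1) expand integral _ that] \<pi>
    by (simp add: val_ge_def)
  then have "\<not> val_ge (j + 1 + 1) (\<tau> \<pi> - \<pi>)" using j(3) by blast
  moreover have "val_ge (j + 1) (\<tau> \<pi> - \<pi>)" using j(2) \<pi> by (simp add: in_ram_group_def val_ge_def)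
  ultimately show "\<tau> \<pi> - \<pi> \<noteq> 0" "v (\<tau> \<pi> - \<pi>) = j + 1" by (auto simp: val_ge_def)
qed

lemma v_diff_odd:
  assumes \<tau>: "field_automorphism \<tau>" "fixed_field \<sigma> \<subseteq> fixed_field \<tau>"
    and j: "1 \<le> j" "in_ram_group j \<tau>" "\<not> in_ram_group (j + 1) \<tau>"
    and x: "x \<noteq> 0" "odd (v x)"
  shows "\<tau> x - x \<noteq> 0" "v (\<tau> x - x) = v x + j"
proof -
  obtain \<pi> where \<pi>: "\<pi> \<noteq> 0" "v \<pi> = 1" using exists_uniformizer by blast
  show "\<tau> x - x \<noteq> 0" "v (\<tau> x - x) = v x + j"
    using in_ram_group_v_diff_odd[OF \<tau>(1) j(2,1) \<pi> v_diff_uniformizer[OF \<tau> j \<pi>] val_ge_two x] .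
qed

lemma val_ge_sigma_diff: "x \<noteq> 0 \<Longrightarrow> val_ge (v x + e0) (\<sigma> x - x)"
  using in_ram_group_val_ge_diff[OF aut ram_1 e0_pos] .

lemma val_ge_sigma2_diff: "x \<noteq> 0 \<Longrightarrow> val_ge (v x + 3 * e0) (\<sigma> (\<sigma> x) - x)"
  using in_ram_group_val_ge_diff[OF aut_2 ram_2, of x] e0_pos by simp

lemma v_sigma_diff_odd:
  assumes "x \<noteq> 0" "odd (v x)" shows "\<sigma> x - x \<noteq> 0" "v (\<sigma> x - x) = v x + e0"
  using v_diff_odd[OF aut subset_refl e0_pos ram_1 not_ram_1 assms] by simp_all

lemma v_sigma2_diff_odd:
  assumes "x \<noteq> 0" "odd (v x)" shows "\<sigma> (\<sigma> x) - x \<noteq> 0" "v (\<sigma> (\<sigma> x) - x) = v x + 3 * e0"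
proof -
  have "fixed_field \<sigma> \<subseteq> fixed_field (\<sigma> ^^ 2)" by (auto simp: fixed_field_def)
  from v_diff_odd[OF aut_2 this _ ram_2 not_ram_2 assms]
  show "\<sigma> (\<sigma> x) - x \<noteq> 0" "v (\<sigma> (\<sigma> x) - x) = v x + 3 * e0" using e0_pos by simp_all
qed

lemma even_v_fixed_sigma2: "\<sigma> (\<sigma> y) = y \<Longrightarrow> y \<noteq> 0 \<Longrightarrow> even (v y)"
  using v_sigma2_diff_odd(1) by auto

lemma fixed_sigma2_uniformizer:
  obtains P where "P \<noteq> 0" "v P = 2" "\<sigma> (\<sigma> P) = P" "val_ge (2 * e0 + 2) (\<sigma> P - P)"
proof -
  obtain \<pi> where \<pi>: "\<pi> \<noteq> 0" "v \<pi> = 1" using exists_uniformizer by blast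
  define \<epsilon> where "\<epsilon> = \<sigma> \<pi> / \<pi> - 1"
  have "\<epsilon> = (\<sigma> \<pi> - \<pi>) / \<pi>" using \<pi> by (simp add: \<epsilon>_def field_simps)
  then have \<epsilon>: "\<epsilon> \<noteq> 0" "v \<epsilon> = e0" using v_sigma_diff_odd[of \<pi>] \<pi> by (simp_all add: v_divide)
  define P where "P = \<pi> * \<sigma> (\<sigma> \<pi>)"
  have P: "P \<noteq> 0" "v P = 2" "\<sigma> (\<sigma> P) = P" using \<pi> by (simp_all add: P_def v_mult)
  have "\<sigma> P / P - 1 = 2 * \<epsilon> + (\<sigma> (\<sigma> \<epsilon>) - \<epsilon>) + \<epsilon> * \<sigma> (\<sigma> \<epsilon>)"
    using \<pi> by (simp add: \<epsilon>_def P_def field_simps)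
  moreover have "val_ge (2 * e0) (2 * \<epsilon>)"
    using val_ge_mult_left[OF val_ge_self[of \<epsilon>], of 2] v_2 \<epsilon> e0_pos val_ge_mono by fastforce
  moreover have "val_ge (2 * e0) (\<sigma> (\<sigma> \<epsilon>) - \<epsilon>)"
    using val_ge_sigma2_diff[OF \<epsilon>(1)] \<epsilon> e0_pos val_ge_mono by fastforce
  moreover have "val_ge (2 * e0) (\<epsilon> * \<sigma> (\<sigma> \<epsilon>))"
    using val_ge_mult[OF val_ge_self val_ge_self, of \<epsilon> "\<sigma> (\<sigma> \<epsilon>)"] \<epsilon> by simp
  ultimately have "higher_unit (2 * e0) (\<sigma> P / P)" unfolding higher_unit_def by (metis val_ge_add)
  then show ?thesis using that P by (simp add: higher_unit_quotient_iff add.commute)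
qed

lemma fixed_element_v_4: obtains N where "N \<noteq> 0" "v N = 4" "\<sigma> N = N"
proof -
  obtain P where "P \<noteq> 0" "v P = 2" "\<sigma> (\<sigma> P) = P" using fixed_sigma2_uniformizer by blast
  then show ?thesis using that[of "P * \<sigma> P"] by (simp add: v_mult mult.commute)
qed

lemma approx_by_fixed_multiple:
  assumes y: "val_ge m y" and c0: "c0 \<noteq> 0" "v c0 = m"
  obtains r where "\<sigma> r = r" "val_ge 0 r" "val_ge (m + 1) (y - c0 * r)"
proof -
  have "val_ge 0 (y / c0)" using y c0 by (cases "y = 0") (simp_all add: val_ge_def v_divide)
  then obtain r where r: "\<sigma> r = r" "val_ge 0 r" "val_ge 1 (y / c0 - r)"
    using fixed_representative by blast
  moreover have "y - c0 * r = c0 * (y / c0 - r)" using c0 by (simp add: field_simps)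
  ultimately show ?thesis using that val_ge_mult_left[OF r(3), of c0] c0 by (simp add: add.commute)
qed

lemma approx_by_fixed:
  assumes "val_ge m y" "4 dvd m" obtains c where "\<sigma> c = c" "val_ge (m + 1) (y - c)"
proof -
  obtain N where N: "N \<noteq> 0" "v N = 4" "\<sigma> N = N" using fixed_element_v_4 by blast
  then have "N powi (m div 4) \<noteq> 0" "v (N powi (m div 4)) = m"
    using assms(2) by (simp_all add: v_power_int)
  then obtain r where "\<sigma> r = r" "val_ge (m + 1) (y - N powi (m div 4) * r)"
    using approx_by_fixed_multiple[OF assms(1)] by metis
  then show ?thesis using that[of "N powi (m div 4) * r"] N(3) by simp
qed

lemma approx_by_fixed_sigma2:
  assumes "val_ge m y" "even m" obtains c where "\<sigma> (\<sigma> c) = c" "val_ge (m + 1) (y - c)"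
proof -
  obtain P where P: "P \<noteq> 0" "v P = 2" "\<sigma> (\<sigma> P) = P" using fixed_sigma2_uniformizer by blast
  then have "P powi (m div 2) \<noteq> 0" "v (P powi (m div 2)) = m"
    using assms(2) by (simp_all add: v_power_int)
  then obtain r where "\<sigma> r = r" "val_ge (m + 1) (y - P powi (m div 2) * r)"
    using approx_by_fixed_multiple[OF assms(1)] by metis
  then show ?thesis using that[of "P powi (m div 2) * r"] P(3) by simp
qed

lemma approx_by_sigma_diff:
  assumes "val_ge m y" "odd (m - e0)"
  obtains b where "val_ge (m - e0) b" "val_ge (m + 1) (y - (\<sigma> b - b))"
proof -
  obtain \<pi> where \<pi>: "\<pi> \<noteq> 0" "v \<pi> = 1" using exists_uniformizer by blast
  define b0 where "b0 = \<pi> powi (m - e0)"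
  have b0: "b0 \<noteq> 0" "v b0 = m - e0" using \<pi> by (simp_all add: b0_def v_power_int)
  then have "\<sigma> b0 - b0 \<noteq> 0" "v (\<sigma> b0 - b0) = m"
    using v_sigma_diff_odd[OF b0(1)] assms(2) by simp_all
  then obtain r where r: "\<sigma> r = r" "val_ge 0 r" "val_ge (m + 1) (y - (\<sigma> b0 - b0) * r)"
    using approx_by_fixed_multiple[OF assms(1)] by metis
  moreover have "\<sigma> (r * b0) - r * b0 = (\<sigma> b0 - b0) * r" using r(1) by (simp add: algebra_simps)
  moreover have "val_ge (m - e0) (r * b0)" using val_ge_mult[OF r(2) val_ge_self[of b0]] b0 by simp
  ultimately show ?thesis using that by metis
qed

lemma fixed_sigma2_integral_sigma_diff:
  assumes "\<sigma> (\<sigma> x) = x" "val_ge 0 x" shows "val_ge (2 * e0 + 2) (\<sigma> x - x)"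
proof -
  obtain P where P: "P \<noteq> 0" "v P = 2" "\<sigma> (\<sigma> P) = P" "val_ge (2 * e0 + 2) (\<sigma> P - P)"
    using fixed_sigma2_uniformizer by blast
  have "\<exists>r z. \<sigma> r = r \<and> z \<in> {z. \<sigma> (\<sigma> z) = z} \<and> val_ge 0 z \<and> y = r + P * z"
    if y: "y \<in> {y. \<sigma> (\<sigma> y) = y}" "val_ge 0 y" for y
  proof -
    obtain r where r: "\<sigma> r = r" "val_ge 1 (y - r)" using fixed_representative[OF y(2)] by blast
    have "val_ge 2 (y - r)"
    proof (cases "y = r")
      case False
      then have "even (v (y - r))" using even_v_fixed_sigma2[of "y - r"] y(1) r(1) by simp
      then show ?thesis using r(2) False by (auto simp: val_ge_def elim!: evenE)
    qed simp
    then have "val_ge 0 ((y - r) / P)"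
      using P(1,2) by (cases "y = r") (simp_all add: val_ge_def v_divide)
    then show ?thesis using r(1) y(1) P(1,3) by (intro exI[of _ r] exI[of _ "(y - r) / P"]) simp
  qed
  moreover have "val_ge 1 P" using P by (simp add: val_ge_def)
  ultimately show ?thesis
    using val_ge_diff_of_uniformizer[OF aut, where S = "{z. \<sigma> (\<sigma> z) = z}", OF _ _ _ P(4)] assms
    by simp
qed

lemma fixed_sigma2_val_ge_sigma_diff:
  assumes x: "\<sigma> (\<sigma> x) = x" "x \<noteq> 0" shows "val_ge (v x + 2 * e0) (\<sigma> x - x)"
proof -
  obtain P where P: "P \<noteq> 0" "v P = 2" "\<sigma> (\<sigma> P) = P" "val_ge (2 * e0 + 2) (\<sigma> P - P)"
    using fixed_sigma2_uniformizer by blast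
  obtain k where k: "v x = 2 * k" using even_v_fixed_sigma2[OF x] by (elim evenE)
  define u where "u = x / P powi k"
  have u: "u \<noteq> 0" "v u = 0" "\<sigma> (\<sigma> u) = u" using P x k by (simp_all add: u_def v_divide v_power_int)
  have "higher_unit (2 * e0) (\<sigma> P / P)" using P by (simp add: higher_unit_quotient_iff add.commute)
  moreover have "higher_unit (2 * e0) (\<sigma> u / u)"
    using fixed_sigma2_integral_sigma_diff[OF u(3)] u val_ge_mono
    by (fastforce simp: higher_unit_quotient_iff val_ge_def)
  ultimately have "higher_unit (2 * e0) (\<sigma> (P powi k * u) / (P powi k * u))"
    using higher_unit_automorphism_quotient[OF aut _ P(1) u(1)] e0_pos by simp
  moreover have "x = P powi k * u" using P(1) by (simp add: u_def)
  ultimately show ?thesis using x(2) by (simp add: higher_unit_quotient_iff)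
qed

text \<open>As \<open>4\<close> divides \<open>m\<close>, an element of \<open>K0\<close> approximates \<open>x\<close> to order \<open>m + 1\<close>,
  hence to order \<open>m + 2\<close>, valuations on \<open>K1\<close> being even.\<close>
lemma fixed_sigma2_sigma_diff_mod_4:
  assumes x: "\<sigma> (\<sigma> x) = x" "val_ge m x" and m: "4 dvd m"
  shows "val_ge (m + 2 * e0 + 2) (\<sigma> x - x)"
proof -
  obtain c where c: "\<sigma> c = c" "val_ge (m + 1) (x - c)" using approx_by_fixed[OF x(2) m] .
  have "val_ge (m + 2) (x - c)"
  proof (cases "x = c")
    case False
    then have "even (v (x - c))" using even_v_fixed_sigma2[of "x - c"] x(1) c(1) by simp
    then show ?thesis using c(2) False m by (auto simp: val_ge_def elim!: evenE) presburger
  qed simp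
  moreover have "\<sigma> x - x = \<sigma> (x - c) - (x - c)" using c(1) by simp
  ultimately show ?thesis
    using fixed_sigma2_val_ge_sigma_diff[of "x - c"] x(1) c(1) val_ge_mono
    by (cases "x = c") (fastforce simp: val_ge_def)+
qed

lemma v_sigma_second_diff:
  assumes "\<alpha> \<noteq> 0" "odd (v \<alpha>)"
  shows "\<sigma> (\<sigma> \<alpha>) - 2 * \<sigma> \<alpha> + \<alpha> \<noteq> 0" "v (\<sigma> (\<sigma> \<alpha>) - 2 * \<sigma> \<alpha> + \<alpha>) = v \<alpha> + 3 * e0"
proof -
  have eq: "\<sigma> (\<sigma> \<alpha>) - 2 * \<sigma> \<alpha> + \<alpha> = (\<sigma> (\<sigma> \<alpha>) - \<alpha>) - 2 * (\<sigma> \<alpha> - \<alpha>)"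
    by (simp add: algebra_simps)
  have "val_ge (v (\<sigma> (\<sigma> \<alpha>) - \<alpha>) + 1) (2 * (\<sigma> \<alpha> - \<alpha>))"
    using val_ge_two_mult[OF val_ge_self[of "\<sigma> \<alpha> - \<alpha>"]] v_sigma_diff_odd[OF assms]
      v_sigma2_diff_odd[OF assms] e0_pos val_ge_mono by fastforce
  from v_diff_dominant[OF v_sigma2_diff_odd(1)[OF assms] this]
  show "\<sigma> (\<sigma> \<alpha>) - 2 * \<sigma> \<alpha> + \<alpha> \<noteq> 0" "v (\<sigma> (\<sigma> \<alpha>) - 2 * \<sigma> \<alpha> + \<alpha>) = v \<alpha> + 3 * e0"
    unfolding eq using v_sigma2_diff_odd(2)[OF assms] by simp_all
qed

text \<open>\<open>(\<sigma>\<^sup>2 - 1)(\<sigma> - 1) = Tr - 2 (\<sigma> + \<sigma>\<^sup>2)\<close>, and the trace \<open>Tr \<alpha>\<close> is the trace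
  from \<open>K1\<close> of \<open>\<alpha> + \<sigma>\<^sup>2 \<alpha>\<close>, which is small when \<open>v \<alpha> \<equiv> e0 mod 4\<close>.\<close>
lemma v_sigma2_sigma_diff:
  assumes \<alpha>: "\<alpha> \<noteq> 0" "odd (v \<alpha>)" and a: "v \<alpha> mod 4 = e0 mod 4"
  defines "Z \<equiv> \<sigma> (\<sigma> (\<sigma> \<alpha>)) - \<sigma> (\<sigma> \<alpha>) - \<sigma> \<alpha> + \<alpha>"
  shows "Z \<noteq> 0" "v Z = v \<alpha> + 5 * e0"
proof -
  define x where "x = \<alpha> + \<sigma> (\<sigma> \<alpha>)"
  define w where "w = \<sigma> \<alpha> + \<sigma> (\<sigma> \<alpha>)"
  have Z: "Z = (x + \<sigma> x) - 2 * w" by (simp add: Z_def x_def w_def algebra_simps)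
  have "val_ge (v \<alpha> + 3 * e0) x"
  proof -
    have "x = 2 * \<alpha> + (\<sigma> (\<sigma> \<alpha>) - \<alpha>)" by (simp add: x_def algebra_simps)
    moreover have "val_ge (v \<alpha> + 3 * e0) (2 * \<alpha>)"
      using val_ge_two_mult[OF val_ge_self[of \<alpha>]] e0_pos val_ge_mono by fastforce
    ultimately show ?thesis using val_ge_sigma2_diff[OF \<alpha>(1)] val_ge_add by metis
  qed
  moreover have "4 dvd v \<alpha> + 3 * e0" using a by presburger
  moreover have "\<sigma> (\<sigma> x) = x" by (simp add: x_def add.commute)
  ultimately have "val_ge (v \<alpha> + 5 * e0 + 1) (2 * x)" "val_ge (v \<alpha> + 5 * e0 + 1) (\<sigma> x - x)"
    using val_ge_two_mult fixed_sigma2_sigma_diff_mod_4 e0_pos val_ge_mono by fastforce+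
  moreover have "x + \<sigma> x = 2 * x + (\<sigma> x - x)" by simp
  ultimately have tr: "val_ge (v \<alpha> + 5 * e0 + 1) (x + \<sigma> x)" using val_ge_add by metis
  have d: "\<sigma> (\<sigma> \<alpha>) - \<sigma> \<alpha> \<noteq> 0" "v (\<sigma> (\<sigma> \<alpha>) - \<sigma> \<alpha>) = v \<alpha> + e0"
    using v_sigma_diff_odd[OF \<alpha>] v_sigma[of "\<sigma> \<alpha> - \<alpha>"] by simp_all
  have w_eq: "w = (\<sigma> (\<sigma> \<alpha>) - \<sigma> \<alpha>) + 2 * \<sigma> \<alpha>" by (simp add: w_def algebra_simps)
  have "val_ge (v (\<sigma> (\<sigma> \<alpha>) - \<sigma> \<alpha>) + 1) (2 * \<sigma> \<alpha>)"
    using val_ge_two_mult[OF val_ge_self[of "\<sigma> \<alpha>"]] d \<alpha>(1) e0_pos val_ge_mono by fastforce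
  from v_add_dominant[OF d(1) this] have "w \<noteq> 0" "v w = v \<alpha> + e0"
    unfolding w_eq[symmetric] d(2) by simp_all
  then have "2 * w \<noteq> 0" "v (2 * w) = v \<alpha> + 5 * e0" by (simp_all add: v_two_mult)
  moreover have "Z = - (2 * w - (x + \<sigma> x))" unfolding Z by simp
  ultimately show "Z \<noteq> 0" "v Z = v \<alpha> + 5 * e0"
    using v_diff_dominant[of "2 * w" "x + \<sigma> x"] tr by (simp_all add: v_minus_commute[of "x + \<sigma> x"])
qed

lemma v_sigma_diff_correction:
  assumes \<alpha>: "\<alpha> \<noteq> 0" "odd (v \<alpha>)" and y: "\<sigma> \<alpha> - \<alpha> - c \<noteq> 0" "v (\<sigma> \<alpha> - \<alpha> - c) = v \<alpha> + 2 * e0"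
  shows "c \<noteq> 0" "v c = v \<alpha> + e0"
proof -
  have "val_ge (v (\<sigma> \<alpha> - \<alpha>) + 1) (\<sigma> \<alpha> - \<alpha> - c)"
    using y v_sigma_diff_odd[OF \<alpha>] e0_pos by (simp add: val_ge_def)
  from v_diff_dominant[OF v_sigma_diff_odd(1)[OF \<alpha>] this] show "c \<noteq> 0" "v c = v \<alpha> + e0"
    using v_sigma_diff_odd(2)[OF \<alpha>] by simp_all
qed

lemma fixed_correction_bound:
  assumes \<alpha>: "\<alpha> \<noteq> 0" "odd (v \<alpha>)" and c: "\<sigma> c = c"
  shows "\<sigma> \<alpha> - \<alpha> - c \<noteq> 0" "v (\<sigma> \<alpha> - \<alpha> - c) \<le> v \<alpha> + 2 * e0"
    and "odd (v (\<sigma> \<alpha> - \<alpha> - c)) \<Longrightarrow> v (\<sigma> \<alpha> - \<alpha> - c) = v \<alpha> + 2 * e0"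
proof -
  define y where "y = \<sigma> \<alpha> - \<alpha> - c"
  have "\<sigma> y - y = \<sigma> (\<sigma> \<alpha>) - 2 * \<sigma> \<alpha> + \<alpha>" using c by (simp add: y_def)
  then have d: "\<sigma> y - y \<noteq> 0" "v (\<sigma> y - y) = v \<alpha> + 3 * e0"
    using v_sigma_second_diff[OF \<alpha>] by simp_all
  then show "\<sigma> \<alpha> - \<alpha> - c \<noteq> 0" unfolding y_def[symmetric] by auto
  then show "v (\<sigma> \<alpha> - \<alpha> - c) \<le> v \<alpha> + 2 * e0"
    and "odd (v (\<sigma> \<alpha> - \<alpha> - c)) \<Longrightarrow> v (\<sigma> \<alpha> - \<alpha> - c) = v \<alpha> + 2 * e0"
    using val_ge_sigma_diff[of y] v_sigma_diff_odd[of y] d by (auto simp: y_def val_ge_def)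
qed

lemma fixed_correction_step:
  assumes a: "v \<alpha> mod 4 = (3 * e0) mod 4" and \<alpha>: "\<alpha> \<noteq> 0" "odd (v \<alpha>)" and c: "\<sigma> c = c"
    and y: "v \<alpha> + e0 \<le> v (\<sigma> \<alpha> - \<alpha> - c)" "even (v (\<sigma> \<alpha> - \<alpha> - c))"
  obtains \<alpha>' c' where "\<alpha>' \<noteq> 0" "v \<alpha>' = v \<alpha>" "\<sigma> c' = c'"
    "v (\<sigma> \<alpha> - \<alpha> - c) < v (\<sigma> \<alpha>' - \<alpha>' - c')"
proof -
  define y where "y = \<sigma> \<alpha> - \<alpha> - c"
  define m where "m = v y"
  have "val_ge m y" by (simp add: m_def val_ge_self)
  show ?thesis
  proof (cases "4 dvd m")
    case True
    then obtain c' where c': "\<sigma> c' = c'" "val_ge (m + 1) (y - c')"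
      using approx_by_fixed[OF \<open>val_ge m y\<close>] by blast
    have eq: "\<sigma> \<alpha> - \<alpha> - (c + c') = y - c'" by (simp add: y_def)
    have "y - c' \<noteq> 0"
      using fixed_correction_bound(1)[OF \<alpha>, of "c + c'"] c c'(1) unfolding eq by simp
    then have "m < v (\<sigma> \<alpha> - \<alpha> - (c + c'))" using c'(2) unfolding eq by (simp add: val_ge_def)
    then show ?thesis using that[OF \<alpha>(1) refl, of "c + c'"] c c'(1) by (simp add: y_def m_def)
  next
    case False
    moreover have "4 dvd v \<alpha> + e0" using a by presburger
    ultimately have "v \<alpha> + e0 < m"
      using y(1) unfolding y_def m_def by (metis order.not_eq_order_implies_strict)
    moreover have "odd (m - e0)" using y(2) e0_odd by (simp add: y_def m_def)
    then obtain b where b: "val_ge (m - e0) b" "val_ge (m + 1) (y - (\<sigma> b - b))"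
      using approx_by_sigma_diff[OF \<open>val_ge m y\<close>] by blast
    ultimately have "val_ge (v \<alpha> + 1) b" using val_ge_mono by fastforce
    then have \<alpha>': "\<alpha> - b \<noteq> 0" "v (\<alpha> - b) = v \<alpha>" using v_diff_dominant[OF \<alpha>(1)] by simp_all
    have eq: "\<sigma> (\<alpha> - b) - (\<alpha> - b) - c = y - (\<sigma> b - b)" by (simp add: y_def)
    have "y - (\<sigma> b - b) \<noteq> 0"
      using fixed_correction_bound(1)[of "\<alpha> - b" c] \<alpha>' \<alpha>(2) c unfolding eq by simp
    then have "m < v (\<sigma> (\<alpha> - b) - (\<alpha> - b) - c)" using b(2) unfolding eq by (simp add: val_ge_def)
    then show ?thesis using that[OF \<alpha>'] c by (simp add: y_def m_def)
  qed
qed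

lemma sigma_sum_approx_fixed:
  assumes a: "odd a" "a mod 4 = (3 * e0) mod 4"
  obtains \<alpha> \<rho> where "\<alpha> \<noteq> 0" "v \<alpha> = a" "\<rho> \<noteq> 0" "v \<rho> = a + 2 * e0"
    "\<sigma> (\<sigma> \<alpha> + \<alpha> - \<rho>) = \<sigma> \<alpha> + \<alpha> - \<rho>" "\<sigma> \<alpha> + \<alpha> - \<rho> \<noteq> 0" "v (\<sigma> \<alpha> + \<alpha> - \<rho>) = a + e0"
proof -
  define P where "P = (\<lambda>(\<alpha>, c). \<alpha> \<noteq> 0 \<and> v \<alpha> = a \<and> \<sigma> c = c \<and> a + e0 \<le> v (\<sigma> \<alpha> - \<alpha> - c))"
  define f where "f = (\<lambda>(\<alpha>, c). v (\<sigma> \<alpha> - \<alpha> - c))"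
  obtain \<pi> where \<pi>: "\<pi> \<noteq> 0" "v \<pi> = 1" using exists_uniformizer by blast
  have "\<exists>p. P p \<and> odd (f p)"
  proof (rule exists_by_bounded_improvement[where B = "a + 2 * e0"])
    show "P (\<pi> powi a, 0)"
      using v_sigma_diff_odd[of "\<pi> powi a"] a(1) \<pi> by (simp add: P_def v_power_int)
    show "f p \<le> a + 2 * e0" if "P p" for p
      using that fixed_correction_bound(2) a(1) by (auto simp: P_def f_def)
    show "\<exists>q. P q \<and> f p < f q" if p: "P p" "\<not> odd (f p)" for p
    proof -
      obtain \<alpha> c where "p = (\<alpha>, c)" by fastforce
      with p have \<alpha>c: "\<alpha> \<noteq> 0" "v \<alpha> = a" "\<sigma> c = c" "a + e0 \<le> v (\<sigma> \<alpha> - \<alpha> - c)"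
        "even (v (\<sigma> \<alpha> - \<alpha> - c))" "f p = v (\<sigma> \<alpha> - \<alpha> - c)" by (auto simp: P_def f_def)
      obtain \<alpha>' c' where "\<alpha>' \<noteq> 0" "v \<alpha>' = a" "\<sigma> c' = c'"
        "v (\<sigma> \<alpha> - \<alpha> - c) < v (\<sigma> \<alpha>' - \<alpha>' - c')"
        using fixed_correction_step[of \<alpha> c] \<alpha>c a by auto
      then show ?thesis using \<alpha>c by (intro exI[of _ "(\<alpha>', c')"]) (auto simp: P_def f_def)
    qed
  qed
  then obtain \<alpha> c where \<alpha>c: "\<alpha> \<noteq> 0" "v \<alpha> = a" "\<sigma> c = c" "odd (v (\<sigma> \<alpha> - \<alpha> - c))"
    by (auto simp: P_def f_def)
  define \<rho> where "\<rho> = \<sigma> \<alpha> - \<alpha> - c + 2 * \<alpha>"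
  have y: "\<sigma> \<alpha> - \<alpha> - c \<noteq> 0" "v (\<sigma> \<alpha> - \<alpha> - c) = a + 2 * e0"
    using fixed_correction_bound[of \<alpha> c] \<alpha>c a(1) by simp_all
  have "val_ge (v (\<sigma> \<alpha> - \<alpha> - c) + 1) (2 * \<alpha>)"
    using val_ge_two_mult[OF val_ge_self[of \<alpha>]] y \<alpha>c e0_pos val_ge_mono by fastforce
  from v_add_dominant[OF y(1) this] have "\<rho> \<noteq> 0" "v \<rho> = a + 2 * e0"
    unfolding \<rho>_def[symmetric] using y(2) by simp_all
  moreover have "\<sigma> \<alpha> + \<alpha> - \<rho> = c" by (simp add: \<rho>_def)
  moreover have "c \<noteq> 0" "v c = a + e0" using v_sigma_diff_correction[of \<alpha> c] \<alpha>c y by simp_all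
  ultimately show ?thesis using that[of \<alpha> \<rho>] \<alpha>c by simp
qed

lemma fixed_sigma2_correction_bound:
  assumes \<alpha>: "\<alpha> \<noteq> 0" "odd (v \<alpha>)" "v \<alpha> mod 4 = e0 mod 4" and \<mu>: "\<sigma> (\<sigma> \<mu>) = \<mu>"
  shows "\<sigma> \<alpha> - \<alpha> - \<mu> \<noteq> 0" "v (\<sigma> \<alpha> - \<alpha> - \<mu>) \<le> v \<alpha> + 2 * e0"
    and "odd (v (\<sigma> \<alpha> - \<alpha> - \<mu>)) \<Longrightarrow> v (\<sigma> \<alpha> - \<alpha> - \<mu>) = v \<alpha> + 2 * e0"
proof -
  define y where "y = \<sigma> \<alpha> - \<alpha> - \<mu>"
  have "\<sigma> (\<sigma> y) - y = \<sigma> (\<sigma> (\<sigma> \<alpha>)) - \<sigma> (\<sigma> \<alpha>) - \<sigma> \<alpha> + \<alpha>" using \<mu> by (simp add: y_def)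
  then have d: "\<sigma> (\<sigma> y) - y \<noteq> 0" "v (\<sigma> (\<sigma> y) - y) = v \<alpha> + 5 * e0"
    using v_sigma2_sigma_diff[OF \<alpha>] by simp_all
  then show "\<sigma> \<alpha> - \<alpha> - \<mu> \<noteq> 0" unfolding y_def[symmetric] by auto
  then show "v (\<sigma> \<alpha> - \<alpha> - \<mu>) \<le> v \<alpha> + 2 * e0"
    and "odd (v (\<sigma> \<alpha> - \<alpha> - \<mu>)) \<Longrightarrow> v (\<sigma> \<alpha> - \<alpha> - \<mu>) = v \<alpha> + 2 * e0"
    using val_ge_sigma2_diff[of y] v_sigma2_diff_odd[of y] d by (auto simp: y_def val_ge_def)
qed

lemma sigma_diff_approx_fixed_sigma2:
  assumes a: "odd a" "a mod 4 = e0 mod 4"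
  obtains \<alpha> \<rho> where "\<alpha> \<noteq> 0" "v \<alpha> = a" "\<rho> \<noteq> 0" "v \<rho> = a + 2 * e0"
    "\<sigma> (\<sigma> (\<sigma> \<alpha> - \<alpha> - \<rho>)) = \<sigma> \<alpha> - \<alpha> - \<rho>" "\<sigma> \<alpha> - \<alpha> - \<rho> \<noteq> 0" "v (\<sigma> \<alpha> - \<alpha> - \<rho>) = a + e0"
proof -
  obtain \<pi> where \<pi>: "\<pi> \<noteq> 0" "v \<pi> = 1" using exists_uniformizer by blast
  define \<alpha> where "\<alpha> = \<pi> powi a"
  have \<alpha>: "\<alpha> \<noteq> 0" "odd (v \<alpha>)" "v \<alpha> mod 4 = e0 mod 4" "v \<alpha> = a"
    using \<pi> a by (simp_all add: \<alpha>_def v_power_int)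
  note bound = fixed_sigma2_correction_bound[OF \<alpha>(1-3)]
  define f where "f = (\<lambda>\<mu>. v (\<sigma> \<alpha> - \<alpha> - \<mu>))"
  have "\<exists>\<mu>. \<sigma> (\<sigma> \<mu>) = \<mu> \<and> odd (f \<mu>)"
  proof (rule exists_by_bounded_improvement[where B = "a + 2 * e0"])
    show "\<sigma> (\<sigma> 0) = 0" by simp
    show "f \<mu> \<le> a + 2 * e0" if "\<sigma> (\<sigma> \<mu>) = \<mu>" for \<mu> using bound(2)[OF that] \<alpha> by (simp add: f_def)
  next
    fix \<mu> assume \<mu>: "\<sigma> (\<sigma> \<mu>) = \<mu>" "\<not> odd (f \<mu>)"
    define y where "y = \<sigma> \<alpha> - \<alpha> - \<mu>"
    have y: "val_ge (v y) y" "even (v y)" using \<mu>(2) by (simp_all add: y_def f_def val_ge_self)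
    obtain c where c: "\<sigma> (\<sigma> c) = c" "val_ge (v y + 1) (y - c)"
      using approx_by_fixed_sigma2[OF y] by blast
    have eq: "\<sigma> \<alpha> - \<alpha> - (\<mu> + c) = y - c" by (simp add: y_def)
    have "y - c \<noteq> 0" using bound(1)[of "\<mu> + c"] \<mu>(1) c(1) unfolding eq by simp
    then have "f \<mu> < f (\<mu> + c)" using c(2) unfolding f_def eq by (simp add: y_def val_ge_def)
    then show "\<exists>\<mu>'. \<sigma> (\<sigma> \<mu>') = \<mu>' \<and> f \<mu> < f \<mu>'" using \<mu>(1) c(1) by (intro exI[of _ "\<mu> + c"]) simp
  qed
  then obtain \<mu> where \<mu>: "\<sigma> (\<sigma> \<mu>) = \<mu>" "odd (v (\<sigma> \<alpha> - \<alpha> - \<mu>))" by (auto simp: f_def)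
  have y: "\<sigma> \<alpha> - \<alpha> - \<mu> \<noteq> 0" "v (\<sigma> \<alpha> - \<alpha> - \<mu>) = a + 2 * e0"
    using bound[OF \<mu>(1)] \<mu>(2) \<alpha>(4) by simp_all
  moreover have "\<mu> \<noteq> 0" "v \<mu> = a + e0" using v_sigma_diff_correction[of \<alpha> \<mu>] \<alpha> y by simp_all
  moreover have "\<sigma> \<alpha> - \<alpha> - (\<sigma> \<alpha> - \<alpha> - \<mu>) = \<mu>" by simp
  ultimately show ?thesis using that[of \<alpha> "\<sigma> \<alpha> - \<alpha> - \<mu>"] \<alpha> \<mu>(1) by simp
qed

theorem exists_alpha_rho:
  assumes a: "odd a"
  shows "\<exists>\<alpha> \<rho>. \<alpha> \<noteq> 0 \<and> v \<alpha> = a \<and> \<rho> \<noteq> 0 \<and> v \<rho> = a + 2 * e0 \<and>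
    (a mod 4 = e0 mod 4 \<longrightarrow>
       (let \<mu>1 = \<sigma> \<alpha> - \<alpha> - \<rho> in \<mu>1 \<in> fixed_field (\<sigma> ^^ 2) \<and> \<mu>1 \<noteq> 0 \<and> v \<mu>1 = a + e0)) \<and>
    (a mod 4 = (3 * e0) mod 4 \<longrightarrow>
       (let \<mu>0 = \<sigma> \<alpha> + \<alpha> - \<rho> in \<mu>0 \<in> fixed_field \<sigma> \<and> \<mu>0 \<noteq> 0 \<and> v \<mu>0 = a + e0))"
proof (cases "a mod 4 = e0 mod 4")
  case True
  then obtain \<alpha> \<rho> where "\<alpha> \<noteq> 0" "v \<alpha> = a" "\<rho> \<noteq> 0" "v \<rho> = a + 2 * e0"
    "\<sigma> (\<sigma> (\<sigma> \<alpha> - \<alpha> - \<rho>)) = \<sigma> \<alpha> - \<alpha> - \<rho>" "\<sigma> \<alpha> - \<alpha> - \<rho> \<noteq> 0" "v (\<sigma> \<alpha> - \<alpha> - \<rho>) = a + e0"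
    using sigma_diff_approx_fixed_sigma2 a by blast
  then show ?thesis using True odd_mod_4_cases[OF a e0_odd]
    by (intro exI[of _ \<alpha>] exI[of _ \<rho>]) (simp add: fixed_field_def)
next
  case False
  then have "a mod 4 = (3 * e0) mod 4" using odd_mod_4_cases[OF a e0_odd] by blast
  then obtain \<alpha> \<rho> where "\<alpha> \<noteq> 0" "v \<alpha> = a" "\<rho> \<noteq> 0" "v \<rho> = a + 2 * e0"
    "\<sigma> (\<sigma> \<alpha> + \<alpha> - \<rho>) = \<sigma> \<alpha> + \<alpha> - \<rho>" "\<sigma> \<alpha> + \<alpha> - \<rho> \<noteq> 0" "v (\<sigma> \<alpha> + \<alpha> - \<rho>) = a + e0"
    using sigma_sum_approx_fixed a by blast
  then show ?thesis using False by (intro exI[of _ \<alpha>] exI[of _ \<rho>]) (simp add: fixed_field_def)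
qed

end

theorem lemma3p7:
  fixes \<sigma> :: "'a::field_char_0 \<Rightarrow> 'a" and v2 :: "'a \<Rightarrow> int"
    and e0 b1 b2 :: int
  assumes K2_local: "finite_ext_Q2 v2"
    and aut: "field_automorphism \<sigma>"
    and ord4: "\<sigma> ^^ 4 = id" and not_ord2: "\<sigma> ^^ 2 \<noteq> id"
    and tot_ram: "\<forall>x\<in>fixed_field \<sigma>. x \<noteq> 0 \<longrightarrow> 4 dvd v2 x"
    and e0_def: "v2 2 = 4 * e0"
    and e0_odd: "odd e0"
    and b1: "b1 = e0" and b2: "b2 = b1 + 2 * e0"
    and breaks: "lower_breaks \<sigma> v2 = {b1, b2}"
  shows "\<forall>a::int. odd a \<longrightarrow>
    (\<exists>\<alpha> \<rho>. \<alpha> \<noteq> 0 \<and> v2 \<alpha> = a \<and> \<rho> \<noteq> 0 \<and> v2 \<rho> = a + (b2 - b1) \<and>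
      (a mod 4 = e0 mod 4 \<longrightarrow>
         (let \<mu>1 = \<sigma> \<alpha> - \<alpha> - \<rho> in
            \<mu>1 \<in> fixed_field (\<sigma> ^^ 2) \<and> \<mu>1 \<noteq> 0 \<and> v2 \<mu>1 = a + b1)) \<and>
      (a mod 4 = (3 * e0) mod 4 \<longrightarrow>
         (let \<mu>0 = \<sigma> \<alpha> + \<alpha> - \<rho> in
            \<mu>0 \<in> fixed_field \<sigma> \<and> \<mu>0 \<noteq> 0 \<and> v2 \<mu>0 = a + b1)))"
proof -
  interpret discrete_valuation v2
    using K2_local by (simp add: discrete_valuation_def finite_ext_Q2_def)
  have e0_pos: "1 \<le> e0" using K2_local e0_def by (simp add: finite_ext_Q2_def)
  have "e0 < 3 * e0" "lower_breaks \<sigma> v2 = {e0, 3 * e0}" using e0_pos breaks b1 b2 by simp_all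
  note ram = ram_groups_of_breaks[OF aut ord4 not_ord2 e0_pos this]
  have "finite_residue_field v2" using K2_local by (simp add: finite_ext_Q2_def)
  interpret cyclic_quartic v2 \<sigma> e0
    by unfold_locales (fact aut ord4 e0_def e0_pos e0_odd \<open>finite_residue_field v2\<close> ram)+
  show ?thesis using exists_alpha_rho b1 b2 by simp
qed

end
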